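(* Let $n \geq 24$, and let \[ L = \{0, 2, 3, 7, 8, 9, 10\}, \qquad R = \{n-11, n-10, n-9, n-8, n-6, n-3, n-2, n-1\}. \] Let $M$ be a subset of $[11, n-12]$ with the property that every prefix and every suffix of the interval $[11, n-12]$ has more than half of its elements in $M$. Then $S = L \cup M \cup R$ is an MSTD set. The number of MSTD subsets of $\{0, 1, \dots, n-1\}$ obtained in this way (as $M$ ranges over all such subsets) is $\Theta(2^n/n)$.
   Context: For integers $a \le b$, $[a,b]$ denotes the set $\{a, a+1, \dots, b\}$. A more sums than differences (MSTD) set is a finite set $S$ of integers with $|S+S| > |S-S|$, where $S+S = \{s_1+s_2 : s_1,s_2\in S\}$ and $S-S = \{s_1-s_2 : s_1,s_2\in S\}$. A prefix of $[11, n-12]$ is an interval $[11, 10+k]$ and a suffix is an interval $[n-11-k, n-12]$, for $1 \le k \le n-22$. *)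

theory Defs
  imports Main "HOL-Library.Landau_Symbols"
begin

definition sumset :: "int set \<Rightarrow> int set" where
  "sumset S = {a + b | a b. a \<in> S \<and> b \<in> S}"

definition diffset :: "int set \<Rightarrow> int set" where
  "diffset S = {a - b | a b. a \<in> S \<and> b \<in> S}"

definition MSTD :: "int set \<Rightarrow> bool" where
  "MSTD S \<longleftrightarrow> finite S \<and> card (sumset S) > card (diffset S)"

definition Lset :: "int set" where
  "Lset = {0, 2, 3, 7, 8, 9, 10}"

definition Rset :: "nat \<Rightarrow> int set" where
  "Rset n = (let m = int n in {m-11, m-10, m-9, m-8, m-6, m-3, m-2, m-1})"

definition good_middle :: "nat \<Rightarrow> int set \<Rightarrow> bool" where
  "good_middle n M \<longleftrightarrow> M \<subseteq> {11 .. int n - 12} \<and>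
     (\<forall>k::nat. 1 \<le> k \<and> k \<le> n - 22 \<longrightarrow>
        2 * card (M \<inter> {11 .. 10 + int k}) > card {11 .. 10 + int k} \<and>
        2 * card (M \<inter> {int n - 11 - int k .. int n - 12}) > card {int n - 11 - int k .. int n - 12})"

definition mstd_family :: "nat \<Rightarrow> int set set" where
  "mstd_family n = {Lset \<union> M \<union> Rset n | M. good_middle n M}"

end

theory Submission
  imports Defs
begin

text \<open>
  Sums: \<open>S = L \<union> M \<union> R\<close> lies in \<open>[0, n - 1]\<close>. \<open>L + L\<close> covers \<open>[0, 20]\<close> except \<open>1\<close>, and \<open>R + R\<close>
  covers \<open>[2n - 22, 2n - 2]\<close>. Every \<open>x \<in> [22, 2n - 24]\<close> is the sum of the endpoints of a prefix
  or suffix interval of the middle, and as \<open>M\<close> contains more than half of that interval, the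
  reflection \<open>a \<mapsto> x - a\<close> maps some element of \<open>M\<close> into \<open>M\<close>. Hence \<open>|S + S| \<ge> 2n - 2\<close>, whereas
  \<open>n - 7\<close> and \<open>7 - n\<close> are not differences, so \<open>|S - S| \<le> 2n - 3\<close>.

  Counting: read \<open>M\<close> as a walk with steps \<open>+1\<close> (element of \<open>M\<close>) and \<open>-1\<close> of length
  \<open>m = n - 22\<close>; the admissible \<open>M\<close> are the walks whose prefix and suffix sums are all positive.
  Let \<open>N t\<close> and \<open>P t\<close> count walks of length \<open>t\<close> with nonnegative resp. positive prefix sums,
  so \<open>P (t + 1) = N t\<close>. Cutting a walk at its last minimum gives \<open>2^l = \<Sum>\<^sub>t N t \<cdot> P (l - t)\<close>;
  together with \<open>N (t + j) \<le> 2^j N t\<close> this squeezes \<open>N t / 2^t\<close> between constant multiples of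
  \<open>1 / \<surd>t\<close>. The number of two-sided walks is at most \<open>P t \<cdot> P (m - t)\<close> (cut in the middle) and,
  by Harris' inequality for the two increasing families, at least \<open>P m\<^sup>2 / 2^m\<close>; both bounds
  are of order \<open>2^m / m\<close>.
\<close>

section \<open>Sum and difference sets\<close>

lemma mem_sumset_iff: "x \<in> sumset S \<longleftrightarrow> (\<exists>a\<in>S. \<exists>b\<in>S. x = a + b)"
  by (auto simp: sumset_def)

lemma mem_diffset_iff: "x \<in> diffset S \<longleftrightarrow> (\<exists>a\<in>S. \<exists>b\<in>S. x = a - b)"
  by (auto simp: diffset_def)

lemma sumset_mono: "A \<subseteq> B \<Longrightarrow> sumset A \<subseteq> sumset B"
  unfolding sumset_def by blast

lemma MSTD_if_missing_difference:
  fixes S :: "int set"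
  assumes S: "S \<subseteq> {0..m}" and sums: "{0..2 * m} - {1} \<subseteq> sumset S"
    and d: "0 < d" "d \<le> m" "d \<notin> diffset S"
  shows "MSTD S"
proof -
  have "sumset S \<subseteq> {0..2 * m}"
  proof
    fix s assume "s \<in> sumset S"
    then obtain a b where "a \<in> S" "b \<in> S" "s = a + b" by (auto simp: mem_sumset_iff)
    moreover from this S have "a \<in> {0..m}" "b \<in> {0..m}" by auto
    ultimately show "s \<in> {0..2 * m}" by auto
  qed
  then have "card ({0..2 * m} - {1}) \<le> card (sumset S)"
    by (intro card_mono[OF finite_subset] sums) auto
  then have "2 * m \<le> int (card (sumset S))" using d by simp
  have neg: "- d \<notin> diffset S"
  proof
    assume "- d \<in> diffset S"
    then obtain a b where "a \<in> S" "b \<in> S" "d = b - a" by (auto simp: mem_diffset_iff)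
    with d(3) show False by (auto simp: mem_diffset_iff)
  qed
  have "diffset S \<subseteq> {-m..m} - {d, -d}"
  proof
    fix x assume x: "x \<in> diffset S"
    then obtain a b where "a \<in> S" "b \<in> S" "x = a - b" by (auto simp: mem_diffset_iff)
    moreover from this S have "a \<in> {0..m}" "b \<in> {0..m}" by auto
    ultimately show "x \<in> {-m..m} - {d, -d}" using d(3) neg x by auto
  qed
  then have "card (diffset S) \<le> card ({-m..m} - {d, -d})"
    by (intro card_mono) auto
  then have "int (card (diffset S)) \<le> 2 * m - 1" using d by (simp add: card_Diff_subset)
  moreover have "finite S" using S by (rule finite_subset) simp
  ultimately show ?thesis
    unfolding MSTD_def using \<open>2 * m \<le> int (card (sumset S))\<close> by linarith
qed

lemma majority_interval_sum:
  assumes "card {lo..hi} < 2 * card (M \<inter> {lo..hi})"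
  shows "lo + hi \<in> sumset M"
proof (rule ccontr)
  assume no: "lo + hi \<notin> sumset M"
  let ?I = "{lo..hi}" and ?r = "\<lambda>a. lo + hi - a"
  have "?r ` (M \<inter> ?I) \<subseteq> ?I - M"
  proof
    fix y assume "y \<in> ?r ` (M \<inter> ?I)"
    then obtain a where a: "a \<in> M" "a \<in> ?I" "y = ?r a" by auto
    then have "lo + hi = a + y" by simp
    with no a(1) have "y \<notin> M" by (auto simp: mem_sumset_iff)
    with a show "y \<in> ?I - M" by auto
  qed
  then have "card (?r ` (M \<inter> ?I)) \<le> card (?I - M)"
    by (intro card_mono) auto
  then have "card (M \<inter> ?I) \<le> card (?I - M)"
    by (simp add: card_image inj_on_def)
  also have "\<dots> = card ?I - card (M \<inter> ?I)"
    by (simp add: card_Diff_subset_Int Int_commute)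
  finally show False using assms by linarith
qed

section \<open>The construction is MSTD\<close>

lemma atLeastAtMost_0_20: "{0..20 :: int} = {0,1,2,3,4,5,6,7,8,9,10,11,12,13,14,15,16,17,18,19,20}"
  by (auto; presburger)

lemma sumset_Lset: "{0..20} - {1} \<subseteq> sumset Lset"
  by (simp add: atLeastAtMost_0_20 insert_Diff_if mem_sumset_iff Lset_def)

text \<open>\<open>Rset n\<close> is the image of \<open>{0, 1, 2, 5, 7, 8, 9, 10}\<close> under \<open>x \<mapsto> n - 1 - x\<close>, and the
  sums of that set fill \<open>[0, 20]\<close>.\<close>

lemma sumset_Rset: "{2 * int n - 22..2 * int n - 2} \<subseteq> sumset (Rset n)"
proof
  fix x assume x: "x \<in> {2 * int n - 22..2 * int n - 2}"
  have "{0..20} \<subseteq> sumset {0, 1, 2, 5, 7, 8, 9, 10}"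
    by (simp add: atLeastAtMost_0_20 mem_sumset_iff)
  then have "2 * int n - 2 - x \<in> sumset {0, 1, 2, 5, 7, 8, 9, 10}"
    using x by auto
  then obtain a b where ab: "a \<in> {0, 1, 2, 5, 7, 8, 9, 10}" "b \<in> {0, 1, 2, 5, 7, 8, 9, 10}"
    "2 * int n - 2 - x = a + b"
    unfolding mem_sumset_iff by blast
  then have "x = (int n - 1 - a) + (int n - 1 - b)" by simp
  moreover have "int n - 1 - a \<in> Rset n" "int n - 1 - b \<in> Rset n"
    using ab(1,2) by (auto simp: Rset_def Let_def)
  ultimately show "x \<in> sumset (Rset n)" unfolding mem_sumset_iff by blast
qed

lemma good_middle_ends:
  assumes "good_middle n M" "23 \<le> n"
  shows "11 \<in> M" "int n - 12 \<in> M"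
proof -
  have "1 < 2 * card (M \<inter> {11})" "1 < 2 * card (M \<inter> {int n - 12})"
    using assms unfolding good_middle_def by (auto dest!: spec[of _ 1])
  then show "11 \<in> M" "int n - 12 \<in> M"
    by (auto split: if_splits simp: Int_insert_right)
qed

lemma good_middle_sums:
  assumes "good_middle n M"
  shows "{22..2 * int n - 24} \<subseteq> sumset M"
proof
  fix x assume x: "x \<in> {22..2 * int n - 24}"
  have pre: "card {11..10 + int k} < 2 * card (M \<inter> {11..10 + int k})"
    and suf: "card {int n - 11 - int k..int n - 12} < 2 * card (M \<inter> {int n - 11 - int k..int n - 12})"
    if "1 \<le> k" "k \<le> n - 22" for k
    using assms that by (auto simp: good_middle_def)
  show "x \<in> sumset M"
  proof (cases "x \<le> int n - 1")
    case True
    with x have "11 + (10 + int (nat (x - 21))) \<in> sumset M"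
      by (intro majority_interval_sum pre) auto
    with x show ?thesis by simp
  next
    case False
    with x have "(int n - 11 - int (nat (2 * int n - 23 - x))) + (int n - 12) \<in> sumset M"
      by (intro majority_interval_sum suf) auto
    then show ?thesis using x False by simp
  qed
qed

lemma n_minus_7_notin_diffset:
  assumes M: "M \<subseteq> {11..int n - 12}" and n: "18 \<le> n"
  shows "int n - 7 \<notin> diffset (Lset \<union> M \<union> Rset n)"
proof
  assume "int n - 7 \<in> diffset (Lset \<union> M \<union> Rset n)"
  then obtain a b where a: "a \<in> Lset \<union> M \<union> Rset n" and b: "b \<in> Lset \<union> M \<union> Rset n"
    and ab: "int n - 7 = a - b"
    unfolding mem_diffset_iff by blast
  have L: "0 \<le> x \<and> x \<le> 10" if "x \<in> Lset" for x using that by (auto simp: Lset_def)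
  have R: "int n - 11 \<le> x \<and> x \<le> int n - 1" if "x \<in> Rset n" for x
    using that by (auto simp: Rset_def Let_def)
  have "0 \<le> b" "a \<le> int n - 1" using a b L R M n by force+
  then have "a \<in> Rset n" "b \<in> Lset"
    using a b ab L R M n by force+
  then show False using ab by (auto simp: Lset_def Rset_def Let_def)
qed

lemma MSTD_Lset_good_middle_Rset:
  assumes n: "24 \<le> n" and M: "good_middle n M"
  shows "MSTD (Lset \<union> M \<union> Rset n)"
proof (rule MSTD_if_missing_difference)
  let ?S = "Lset \<union> M \<union> Rset n"
  have Msub: "M \<subseteq> {11..int n - 12}" using M by (simp add: good_middle_def)
  show "?S \<subseteq> {0..int n - 1}" using Msub n by (auto simp: Lset_def Rset_def Let_def)
  show "int n - 7 \<notin> diffset ?S" using n_minus_7_notin_diffset[OF Msub] n by simp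
  show "0 < int n - 7" "int n - 7 \<le> int n - 1" using n by simp_all
  have "10 \<in> ?S" "11 \<in> ?S" "int n - 11 \<in> ?S" "int n - 12 \<in> ?S"
    using good_middle_ends[OF M] n by (auto simp: Lset_def Rset_def Let_def)
  then have ends: "10 + 11 \<in> sumset ?S" "(int n - 11) + (int n - 12) \<in> sumset ?S"
    unfolding mem_sumset_iff by blast+
  have sums: "sumset Lset \<subseteq> sumset ?S" "sumset M \<subseteq> sumset ?S" "sumset (Rset n) \<subseteq> sumset ?S"
    by (intro sumset_mono; blast)+
  show "{0..2 * (int n - 1)} - {1} \<subseteq> sumset ?S"
  proof
    fix x assume x: "x \<in> {0..2 * (int n - 1)} - {1}"
    consider "x \<le> 20" | "x = 21" | "22 \<le> x \<and> x \<le> 2 * int n - 24" | "x = 2 * int n - 23"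
      | "2 * int n - 22 \<le> x" by linarith
    then show "x \<in> sumset ?S"
      using x ends sums sumset_Lset good_middle_sums[OF M] sumset_Rset[of n] by cases auto
  qed
qed

section \<open>Walks\<close>

definition balance :: "bool list \<Rightarrow> int" where
  "balance xs = sum_list (map (\<lambda>b. if b then 1 else -1) xs)"

lemma balance_simps [simp]:
  "balance [] = 0"
  "balance (x # xs) = (if x then 1 else -1) + balance xs"
  "balance (xs @ ys) = balance xs + balance ys"
  by (simp_all add: balance_def)

lemma balance_rev [simp]: "balance (rev xs) = balance xs"
  by (simp add: balance_def rev_map[symmetric])

lemma balance_map_Not [simp]: "balance (map Not xs) = - balance xs"
  by (induction xs) auto

lemma balance_eq_count: "balance xs = 2 * int (length (filter id xs)) - int (length xs)"
  by (induction xs) auto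

lemma balance_mono: "list_all2 (\<le>) xs ys \<Longrightarrow> balance xs \<le> balance ys"
  by (induction rule: list_all2_induct) auto

lemma balance_take_drop: "balance (take k xs) + balance (drop k xs) = balance xs"
  by (metis append_take_drop_id balance_simps(3))

lemma balance_take_add: "balance (take (i + j) xs) = balance (take i xs) + balance (take j (drop i xs))"
  by (simp add: take_add)

definition positive_prefixes :: "bool list \<Rightarrow> bool" where
  "positive_prefixes xs \<longleftrightarrow> (\<forall>k\<in>{1..length xs}. 0 < balance (take k xs))"

definition nonneg_prefixes :: "bool list \<Rightarrow> bool" where
  "nonneg_prefixes xs \<longleftrightarrow> (\<forall>k\<le>length xs. 0 \<le> balance (take k xs))"

definition positive_suffixes :: "bool list \<Rightarrow> bool" where
  "positive_suffixes xs \<longleftrightarrow> positive_prefixes (rev xs)"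

definition nonpos_suffixes :: "bool list \<Rightarrow> bool" where
  "nonpos_suffixes xs \<longleftrightarrow> (\<forall>k\<le>length xs. balance (drop k xs) \<le> 0)"

definition pos_walks :: "nat \<Rightarrow> bool list set" where
  "pos_walks m = {xs. length xs = m \<and> positive_prefixes xs}"

definition nonneg_walks :: "nat \<Rightarrow> bool list set" where
  "nonneg_walks m = {xs. length xs = m \<and> nonneg_prefixes xs}"

definition nonpos_end_walks :: "nat \<Rightarrow> bool list set" where
  "nonpos_end_walks m = {xs. length xs = m \<and> nonpos_suffixes xs}"

definition two_sided_walks :: "nat \<Rightarrow> bool list set" where
  "two_sided_walks m = {xs. length xs = m \<and> positive_prefixes xs \<and> positive_suffixes xs}"

lemma finite_bool_lists [simp]: "finite {xs :: bool list. length xs = m}"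
  using finite_lists_length_eq[of "UNIV :: bool set" m] by simp

lemma finite_bool_lists_with [simp]: "finite {xs :: bool list. length xs = m \<and> P xs}"
  by (rule finite_subset[of _ "{xs. length xs = m}"]) auto

lemma card_bool_lists: "card {xs :: bool list. length xs = m} = 2 ^ m"
  using card_lists_length_eq[of "UNIV :: bool set" m] by simp

lemma finite_walks [simp]:
  "finite (pos_walks m)" "finite (nonneg_walks m)" "finite (nonpos_end_walks m)"
  "finite (two_sided_walks m)"
  by (simp_all add: pos_walks_def nonneg_walks_def nonpos_end_walks_def two_sided_walks_def)

lemma pos_walks_Suc: "pos_walks (Suc k) = Cons True ` nonneg_walks k"
proof (rule set_eqI, rule iffI)
  fix ys assume "ys \<in> pos_walks (Suc k)"
  then obtain y xs where ys: "ys = y # xs" "length xs = k" and pos: "positive_prefixes ys"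
    by (cases ys) (auto simp: pos_walks_def)
  have "0 < balance (take 1 ys)"
    using pos unfolding positive_prefixes_def by (rule bspec) (simp add: ys)
  then have y: "y" using ys by (auto split: if_splits)
  have "0 \<le> balance (take j xs)" if "j \<le> k" for j
    using pos that ys y by (auto simp: positive_prefixes_def dest!: bspec[of _ _ "Suc j"])
  then show "ys \<in> Cons True ` nonneg_walks k"
    using ys y by (auto simp: nonneg_walks_def nonneg_prefixes_def)
next
  fix ys assume "ys \<in> Cons True ` nonneg_walks k"
  then obtain xs where ys: "ys = True # xs" "length xs = k" and nn: "nonneg_prefixes xs"
    by (auto simp: nonneg_walks_def)
  have "0 < balance (take j ys)" if j: "j \<in> {1..Suc k}" for j
  proof -
    obtain i where "j = Suc i" "i \<le> k" using j by (cases j) auto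
    then show ?thesis using nn ys by (auto simp: nonneg_prefixes_def)
  qed
  then show "ys \<in> pos_walks (Suc k)" using ys by (simp add: pos_walks_def positive_prefixes_def)
qed

lemma card_pos_walks_Suc: "card (pos_walks (Suc k)) = card (nonneg_walks k)"
  by (simp add: pos_walks_Suc card_image)

lemma nonneg_walks_Suc_subset:
  "nonneg_walks (Suc k) \<subseteq> (\<lambda>(ys, b). ys @ [b]) ` (nonneg_walks k \<times> UNIV)"
proof
  fix xs assume "xs \<in> nonneg_walks (Suc k)"
  then have len: "length xs = Suc k" and nn: "nonneg_prefixes xs"
    by (auto simp: nonneg_walks_def)
  have xs: "xs = butlast xs @ [last xs]"
    using len by (metis append_butlast_last_id list.size(3) nat.distinct(1))
  have "nonneg_prefixes (butlast xs)"
    using nn len by (auto simp: nonneg_prefixes_def butlast_conv_take)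
  then show "xs \<in> (\<lambda>(ys, b). ys @ [b]) ` (nonneg_walks k \<times> UNIV)"
    using xs len by (auto simp: nonneg_walks_def intro!: image_eqI[where x = "(butlast xs, last xs)"])
qed

lemma card_nonneg_walks_Suc_le: "card (nonneg_walks (Suc k)) \<le> 2 * card (nonneg_walks k)"
proof -
  have "card (nonneg_walks (Suc k)) \<le> card ((\<lambda>(ys, b). ys @ [b]) ` (nonneg_walks k \<times> (UNIV :: bool set)))"
    by (intro card_mono nonneg_walks_Suc_subset) simp
  also have "\<dots> \<le> card (nonneg_walks k \<times> (UNIV :: bool set))"
    by (rule card_image_le) simp
  finally show ?thesis by (simp add: card_cartesian_product)
qed

lemma card_nonneg_walks_le: "j \<le> k \<Longrightarrow> card (nonneg_walks k) \<le> 2 ^ (k - j) * card (nonneg_walks j)"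
proof (induction k rule: dec_induct)
  case (step k)
  have "card (nonneg_walks (Suc k)) \<le> 2 * (2 ^ (k - j) * card (nonneg_walks j))"
    using step.IH card_nonneg_walks_Suc_le[of k] by linarith
  then show ?case using step.hyps by (simp add: Suc_diff_le)
qed simp

lemma nonpos_suffixes_rev_map_Not_iff: "nonpos_suffixes (rev (map Not xs)) \<longleftrightarrow> nonneg_prefixes xs"
proof -
  have "nonpos_suffixes (rev (map Not xs)) \<longleftrightarrow> (\<forall>k\<le>length xs. 0 \<le> balance (take (length xs - k) xs))"
    by (simp add: nonpos_suffixes_def drop_rev take_map)
  also have "\<dots> \<longleftrightarrow> nonneg_prefixes xs"
    unfolding nonneg_prefixes_def by (metis diff_diff_cancel diff_le_self)
  finally show ?thesis .
qed

lemma card_nonpos_end_walks: "card (nonpos_end_walks m) = card (nonneg_walks m)"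
proof -
  let ?f = "\<lambda>xs. rev (map Not xs)"
  have inv: "?f (?f xs) = xs" for xs by (simp add: rev_map comp_def)
  have "nonpos_end_walks m = ?f ` nonneg_walks m"
  proof (rule set_eqI)
    fix xs show "xs \<in> nonpos_end_walks m \<longleftrightarrow> xs \<in> ?f ` nonneg_walks m"
      using nonpos_suffixes_rev_map_Not_iff[of "?f xs"] inv
      by (auto simp: nonpos_end_walks_def nonneg_walks_def nonpos_suffixes_rev_map_Not_iff intro!: image_eqI[of _ ?f "?f xs"])
  qed
  moreover have "inj ?f" by (metis inv injI)
  ultimately show ?thesis by (simp add: card_image inj_on_subset)
qed

lemma last_minimum_split:
  "\<exists>t\<le>length xs. nonpos_suffixes (take t xs) \<and> positive_prefixes (drop t xs)"
proof -
  define h where "h j = balance (take j xs)" for j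
  define I where "I = {0..length xs}"
  define t where "t = Max {j \<in> I. \<forall>i\<in>I. h j \<le> h i}"
  have "Min (h ` I) \<in> h ` I" by (intro Min_in) (auto simp: I_def)
  then obtain j where "j \<in> I" "h j = Min (h ` I)" by auto
  then have "j \<in> I" "\<forall>i\<in>I. h j \<le> h i" by (auto simp: I_def)
  then have "t \<in> {j \<in> I. \<forall>i\<in>I. h j \<le> h i}"
    unfolding t_def by (intro Max_in) (auto simp: I_def)
  then have t: "t \<le> length xs" and tmin: "\<And>i. i \<le> length xs \<Longrightarrow> h t \<le> h i"
    by (auto simp: I_def)
  have tlast: "h t < h i" if "t < i" "i \<le> length xs" for i
  proof (rule ccontr)
    assume "\<not> h t < h i"
    then have "i \<in> {j \<in> I. \<forall>i\<in>I. h j \<le> h i}"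
      using tmin that by (fastforce simp: I_def)
    then have "i \<le> t" unfolding t_def by (intro Max_ge) (auto simp: I_def)
    then show False using that by simp
  qed
  have "nonpos_suffixes (take t xs)"
    unfolding nonpos_suffixes_def
  proof (intro allI impI)
    fix k assume "k \<le> length (take t xs)"
    then have "take k (take t xs) = take k xs" by simp
    then have "h t = h k + balance (drop k (take t xs))"
      using balance_take_drop[of k "take t xs"] by (simp add: h_def)
    then show "balance (drop k (take t xs)) \<le> 0" using tmin[of k] t \<open>k \<le> _\<close> by simp
  qed
  moreover have "positive_prefixes (drop t xs)"
    unfolding positive_prefixes_def
  proof
    fix k assume "k \<in> {1..length (drop t xs)}"
    then have "h t < h (t + k)" using tlast by auto
    then show "0 < balance (take k (drop t xs))" by (simp add: h_def balance_take_add)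
  qed
  ultimately show ?thesis using t by blast
qed

lemma last_minimum_split_unique:
  assumes "length A < length A'" "A @ B = A' @ B'" "nonpos_suffixes A'" "positive_prefixes B"
  shows False
proof -
  define C where "C = take (length A' - length A) B"
  have A': "A' = A @ C"
    using arg_cong[OF assms(2), of "take (length A')"] assms(1) by (simp add: C_def)
  have "length A' \<le> length A + length B"
    using arg_cong[OF assms(2), of length] by simp
  then have "length A' - length A \<in> {1..length B}"
    using assms(1) by auto
  then have "0 < balance C"
    using assms(4) by (simp add: positive_prefixes_def C_def)
  moreover have "balance (drop (length A) A') \<le> 0"
    using assms(1,3) by (simp add: nonpos_suffixes_def)
  ultimately show False by (simp add: A')
qed

definition split_walks :: "nat \<Rightarrow> nat \<Rightarrow> bool list set" where
  "split_walks l t = (\<lambda>(A, B). A @ B) ` (nonpos_end_walks t \<times> pos_walks (l - t))"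

lemma card_split_walks: "card (split_walks l t) = card (nonneg_walks t) * card (pos_walks (l - t))"
proof -
  have "inj_on (\<lambda>(A, B). A @ B) (nonpos_end_walks t \<times> pos_walks (l - t))"
    by (auto simp: inj_on_def nonpos_end_walks_def)
  then show ?thesis
    by (simp add: split_walks_def card_image card_cartesian_product card_nonpos_end_walks)
qed

lemma walks_eq_UN_split_walks: "{xs. length xs = l} = (\<Union>t\<in>{0..l}. split_walks l t)"
proof (rule set_eqI, rule iffI)
  fix xs :: "bool list" assume xs: "xs \<in> {xs. length xs = l}"
  moreover obtain t where "t \<le> length xs" "nonpos_suffixes (take t xs)" "positive_prefixes (drop t xs)"
    using last_minimum_split by blast
  ultimately have "xs \<in> split_walks l t"
    unfolding split_walks_def nonpos_end_walks_def pos_walks_def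
    by (intro image_eqI[of _ _ "(take t xs, drop t xs)"]) auto
  then show "xs \<in> (\<Union>t\<in>{0..l}. split_walks l t)"
    using \<open>t \<le> length xs\<close> xs by auto
qed (auto simp: split_walks_def nonpos_end_walks_def pos_walks_def)

lemma finite_split_walks [simp]: "finite (split_walks l t)"
  by (simp add: split_walks_def)

lemma split_walks_disjoint:
  assumes "t \<noteq> t'" shows "split_walks l t \<inter> split_walks l t' = {}"
proof (rule equals0I)
  fix xs assume "xs \<in> split_walks l t \<inter> split_walks l t'"
  then obtain A B A' B' where "xs = A @ B" "A \<in> nonpos_end_walks t" "B \<in> pos_walks (l - t)"
    and "xs = A' @ B'" "A' \<in> nonpos_end_walks t'" "B' \<in> pos_walks (l - t')"
    unfolding split_walks_def by force
  then show False
    using assms last_minimum_split_unique[of A A' B B'] last_minimum_split_unique[of A' A B' B] by (cases "t < t'") (auto simp: nonpos_end_walks_def pos_walks_def)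
qed

lemma two_pow_eq_sum_walks: "2 ^ l = (\<Sum>t\<in>{0..l}. card (nonneg_walks t) * card (pos_walks (l - t)))"
proof -
  have "2 ^ l = card (\<Union>t\<in>{0..l}. split_walks l t)"
    by (simp add: card_bool_lists walks_eq_UN_split_walks[symmetric])
  also have "\<dots> = (\<Sum>t\<in>{0..l}. card (split_walks l t))"
    by (rule card_UN_disjoint) (auto simp: split_walks_disjoint)
  finally show ?thesis by (simp add: card_split_walks)
qed

lemma card_pos_walks_0: "card (pos_walks 0) = 1"
proof -
  have "pos_walks 0 = {[]}" by (auto simp: pos_walks_def positive_prefixes_def)
  then show ?thesis by simp
qed

lemma sum_nonneg_walks_convolution_le:
  "(\<Sum>t\<in>{0..m}. card (nonneg_walks t) * card (nonneg_walks (m - t))) \<le> 2 ^ Suc m"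
proof -
  have "(\<Sum>t\<in>{0..m}. card (nonneg_walks t) * card (nonneg_walks (m - t)))
      = (\<Sum>t\<in>{0..m}. card (nonneg_walks t) * card (pos_walks (Suc m - t)))"
    by (intro sum.cong) (auto simp: Suc_diff_le card_pos_walks_Suc)
  also have "\<dots> \<le> (\<Sum>t\<in>{0..Suc m}. card (nonneg_walks t) * card (pos_walks (Suc m - t)))"
    by (intro sum_mono2) auto
  finally show ?thesis by (simp only: two_pow_eq_sum_walks)
qed

lemma card_nonneg_walks_sq_le: "(k + 1) * card (nonneg_walks k) ^ 2 \<le> 2 * 4 ^ k"
proof -
  let ?N = "\<lambda>t. card (nonneg_walks t)"
  have "(k + 1) * ?N k ^ 2 = (\<Sum>t\<in>{0..k}. ?N k ^ 2)" by simp
  also have "\<dots> \<le> (\<Sum>t\<in>{0..k}. 2 ^ k * (?N t * ?N (k - t)))"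
  proof (intro sum_mono)
    fix t assume "t \<in> {0..k}"
    then have "?N k ^ 2 \<le> (2 ^ (k - t) * ?N t) * (2 ^ t * ?N (k - t))"
      unfolding power2_eq_square
      using card_nonneg_walks_le[of t k] card_nonneg_walks_le[of "k - t" k]
      by (intro mult_le_mono) auto
    also have "\<dots> = 2 ^ (k - t + t) * (?N t * ?N (k - t))" by (simp add: power_add)
    finally show "?N k ^ 2 \<le> 2 ^ k * (?N t * ?N (k - t))" using \<open>t \<in> _\<close> by simp
  qed
  also have "\<dots> = 2 ^ k * (\<Sum>t\<in>{0..k}. ?N t * ?N (k - t))" by (simp add: sum_distrib_left)
  also have "\<dots> \<le> 2 ^ k * 2 ^ Suc k" using sum_nonneg_walks_convolution_le by simp
  also have "\<dots> = 2 * 4 ^ k" by (simp add: power_mult_distrib[symmetric])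
  finally show ?thesis .
qed

definition nonneg_density :: "nat \<Rightarrow> real" where
  "nonneg_density t = card (nonneg_walks t) / 2 ^ t"

lemma nonneg_density_nonneg: "0 \<le> nonneg_density t"
  by (simp add: nonneg_density_def)

lemma nonneg_density_le: "nonneg_density t \<le> sqrt 2 / sqrt (real t + 1)"
proof -
  have "real ((t + 1) * card (nonneg_walks t) ^ 2) \<le> real (2 * 4 ^ t)"
    using card_nonneg_walks_sq_le[of t] by (simp only: of_nat_le_iff)
  then have "(t + 1) * real (card (nonneg_walks t)) ^ 2 \<le> 2 * 4 ^ t"
    by (simp add: algebra_simps)
  moreover have "(4 :: real) ^ t = (2 ^ t) ^ 2" by (simp add: power2_eq_square flip: power_mult_distrib)
  ultimately have "nonneg_density t ^ 2 \<le> 2 / (t + 1)"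
    by (simp add: nonneg_density_def power_divide field_simps)
  then have "nonneg_density t \<le> sqrt (2 / (t + 1))" by (rule real_le_rsqrt)
  then show ?thesis by (simp add: real_sqrt_divide add.commute)
qed

lemma nonneg_density_antimono: "j \<le> k \<Longrightarrow> nonneg_density k \<le> nonneg_density j"
proof -
  assume "j \<le> k"
  then have "real (card (nonneg_walks k)) \<le> real (2 ^ (k - j) * card (nonneg_walks j))"
    using card_nonneg_walks_le[of j k] by (simp only: of_nat_le_iff)
  then have "real (card (nonneg_walks k)) \<le> 2 ^ (k - j) * real (card (nonneg_walks j))"
    by simp
  moreover have "(2 :: real) ^ (k - j) = 2 ^ k / 2 ^ j"
    using \<open>j \<le> k\<close> by (simp add: power_diff)
  ultimately show ?thesis by (simp add: nonneg_density_def field_simps)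
qed

lemma sum_inverse_sqrt_le: "(\<Sum>t\<in>{0..n}. 1 / sqrt (real t + 1)) \<le> 2 * sqrt (real n + 1)"
proof (induction n)
  case (Suc n)
  have "sqrt (real n + 1) * sqrt (real n + 2) \<le> real n + 3 / 2"
    by (subst real_sqrt_mult[symmetric], rule real_le_lsqrt) (auto simp: power2_eq_square algebra_simps)
  then have "2 * sqrt (real n + 1) + 1 / sqrt (real n + 2) \<le> 2 * sqrt (real n + 2)"
    by (simp add: field_simps)
  then show ?case using Suc by (simp add: add.commute)
qed simp

lemma sum_nonneg_density_le: "(\<Sum>t\<in>{0..n}. nonneg_density t) \<le> 2 * sqrt 2 * sqrt (real n + 1)"
proof -
  have "(\<Sum>t\<in>{0..n}. nonneg_density t) \<le> (\<Sum>t\<in>{0..n}. sqrt 2 * (1 / sqrt (real t + 1)))"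
    using nonneg_density_le by (intro sum_mono) (simp add: add.commute)
  also have "\<dots> = sqrt 2 * (\<Sum>t\<in>{0..n}. 1 / sqrt (real t + 1))"
    by (rule sum_distrib_left[symmetric])
  also have "\<dots> \<le> sqrt 2 * (2 * sqrt (real n + 1))"
    by (intro mult_left_mono sum_inverse_sqrt_le) simp
  finally show ?thesis by simp
qed

lemma nonneg_density_recurrence:
  "1 = nonneg_density (Suc m) + (\<Sum>t\<in>{0..m}. nonneg_density t * nonneg_density (m - t)) / 2"
proof -
  let ?N = "\<lambda>t. card (nonneg_walks t)"
  define Q where "Q = (\<Sum>t\<in>{0..m}. real (?N t) * real (?N (m - t)))"
  define P where "P = (\<Sum>t\<in>{0..m}. nonneg_density t * nonneg_density (m - t))"
  have "{0..Suc m} = insert (Suc m) {0..m}" by auto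
  then have "2 ^ Suc m = ?N (Suc m) + (\<Sum>t\<in>{0..m}. ?N t * ?N (m - t))"
    using two_pow_eq_sum_walks[of "Suc m"] by (simp add: card_pos_walks_0 Suc_diff_le card_pos_walks_Suc)
  then have total: "(2 :: real) ^ Suc m = ?N (Suc m) + Q"
    unfolding Q_def by (metis (no_types, lifting) of_nat_add of_nat_mult of_nat_numeral of_nat_power of_nat_sum sum.cong)
  have "P = Q / 2 ^ m"
    unfolding P_def Q_def sum_divide_distrib
  proof (intro sum.cong)
    fix t assume "t \<in> {0..m}"
    then have "(2 :: real) ^ t * 2 ^ (m - t) = 2 ^ m" by (simp flip: power_add)
    then show "nonneg_density t * nonneg_density (m - t) = real (?N t) * real (?N (m - t)) / 2 ^ m"
      by (simp add: nonneg_density_def)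
  qed simp
  then have "nonneg_density (Suc m) + P / 2 = (?N (Suc m) + Q) / 2 ^ Suc m"
    by (simp add: nonneg_density_def add_divide_distrib)
  then show ?thesis unfolding P_def total[symmetric] by simp
qed

lemma sum_nonneg_density_products_le:
  "(\<Sum>t\<in>{0..2 * k}. nonneg_density t * nonneg_density (2 * k - t))
     \<le> nonneg_density k * (4 * sqrt 2 * sqrt (2 * real k + 1))"
proof -
  let ?d = nonneg_density
  have "?d t * ?d (2 * k - t) \<le> ?d k * (?d t + ?d (2 * k - t))" for t
  proof (cases "t \<le> k")
    case True
    then have "?d (2 * k - t) \<le> ?d k" by (intro nonneg_density_antimono) simp
    then have "?d t * ?d (2 * k - t) \<le> ?d k * ?d t"
      by (metis mult.commute mult_left_mono nonneg_density_nonneg)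
    moreover have "0 \<le> ?d k * ?d (2 * k - t)" by (simp add: nonneg_density_nonneg)
    ultimately show ?thesis unfolding distrib_left by linarith
  next
    case False
    then have "?d t \<le> ?d k" by (intro nonneg_density_antimono) simp
    then have "?d t * ?d (2 * k - t) \<le> ?d k * ?d (2 * k - t)"
      by (intro mult_right_mono nonneg_density_nonneg)
    moreover have "0 \<le> ?d k * ?d t" by (simp add: nonneg_density_nonneg)
    ultimately show ?thesis unfolding distrib_left by linarith
  qed
  then have "(\<Sum>t\<in>{0..2 * k}. ?d t * ?d (2 * k - t))
      \<le> (\<Sum>t\<in>{0..2 * k}. ?d k * (?d t + ?d (2 * k - t)))"
    by (intro sum_mono)
  also have "\<dots> = ?d k * (2 * (\<Sum>t\<in>{0..2 * k}. ?d t))"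
    using sum.atLeastAtMost_rev[of ?d 0 "2 * k"]
    by (simp add: sum_distrib_left[symmetric] sum.distrib)
  also have "\<dots> \<le> ?d k * (2 * (2 * sqrt 2 * sqrt (real (2 * k) + 1)))"
    by (intro mult_left_mono sum_nonneg_density_le nonneg_density_nonneg) simp
  finally show ?thesis by simp
qed

lemma nonneg_density_ge:
  assumes "3 \<le> k" shows "1 / (4 * sqrt 2 * sqrt (2 * real k + 1)) \<le> nonneg_density k"
proof -
  have "2 * sqrt 2 = sqrt (4 * 2 :: real)" by (simp only: real_sqrt_mult real_sqrt_four)
  also have "\<dots> \<le> sqrt (real (2 * k + 1) + 1)" using assms by simp
  finally have "sqrt 2 / sqrt (real (2 * k + 1) + 1) \<le> sqrt 2 / (2 * sqrt 2)"
    by (intro divide_left_mono) simp_all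
  with nonneg_density_le have "nonneg_density (2 * k + 1) \<le> sqrt 2 / (2 * sqrt 2)"
    by (rule order_trans)
  then have "nonneg_density (2 * k + 1) \<le> 1 / 2" by simp
  then have "1 \<le> 1 / 2 + nonneg_density k * (4 * sqrt 2 * sqrt (2 * real k + 1)) / 2"
    using nonneg_density_recurrence[of "2 * k"] sum_nonneg_density_products_le[of k] by simp
  then show ?thesis by (simp add: field_simps)
qed

definition up_closed :: "bool list set \<Rightarrow> bool" where
  "up_closed A \<longleftrightarrow> (\<forall>xs\<in>A. \<forall>ys. list_all2 (\<le>) xs ys \<longrightarrow> ys \<in> A)"

lemma up_closed_rev_image: "up_closed A \<Longrightarrow> up_closed (rev ` A)"
  unfolding up_closed_def
proof (intro ballI allI impI)
  fix xs ys assume A: "\<forall>xs\<in>A. \<forall>ys. list_all2 (\<le>) xs ys \<longrightarrow> ys \<in> A"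
    and "xs \<in> rev ` A" "list_all2 (\<le>) xs ys"
  then have "rev xs \<in> A" "list_all2 (\<le>) (rev xs) (rev ys)" by auto
  then have "rev ys \<in> A" using A by blast
  then show "ys \<in> rev ` A" by (rule rev_image_eqI) simp
qed

lemma up_closed_pos_walks: "up_closed (pos_walks m)"
  unfolding up_closed_def
proof (intro ballI allI impI)
  fix xs ys assume xs: "xs \<in> pos_walks m" and le: "list_all2 (\<le>) xs ys"
  then have len: "length ys = length xs" by (simp add: list_all2_lengthD)
  have "0 < balance (take k ys)" if "k \<in> {1..length ys}" for k
  proof -
    have "0 < balance (take k xs)" using xs that len by (simp add: pos_walks_def positive_prefixes_def)
    also have "\<dots> \<le> balance (take k ys)" using le by (intro balance_mono list_all2_takeI)
    finally show ?thesis .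
  qed
  then show "ys \<in> pos_walks m"
    using xs len by (simp add: pos_walks_def positive_prefixes_def)
qed

lemma sum_mult_le_twice_sum_sorted:
  fixes a0 a1 b0 b1 :: nat
  assumes "a0 \<le> a1" "b0 \<le> b1"
  shows "(a0 + a1) * (b0 + b1) \<le> 2 * (a0 * b0 + a1 * b1)"
proof -
  obtain d e where "a1 = a0 + d" "b1 = b0 + e" using assms le_Suc_ex by blast
  then show ?thesis by (simp add: algebra_simps)
qed

lemma card_split_head:
  assumes "A \<subseteq> {xs. length xs = Suc m}"
  shows "card A = card {xs. False # xs \<in> A} + card {xs. True # xs \<in> A}"
proof -
  have fin: "finite {xs. b # xs \<in> A}" for b
    using assms by (intro finite_subset[OF _ finite_bool_lists[of m]]) auto
  have "A = Cons False ` {xs. False # xs \<in> A} \<union> Cons True ` {xs. True # xs \<in> A}"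
  proof (rule set_eqI, rule iffI)
    fix ys assume "ys \<in> A"
    with assms obtain y xs where "ys = y # xs" by (cases ys) auto
    with \<open>ys \<in> A\<close> show "ys \<in> Cons False ` {xs. False # xs \<in> A} \<union> Cons True ` {xs. True # xs \<in> A}"
      by (cases y) auto
  qed auto
  then have "card A = card (Cons False ` {xs. False # xs \<in> A} \<union> Cons True ` {xs. True # xs \<in> A})"
    by (rule arg_cong)
  also have "\<dots> = card (Cons False ` {xs. False # xs \<in> A}) + card (Cons True ` {xs. True # xs \<in> A})"
    by (rule card_Un_disjoint) (auto simp: fin)
  finally show ?thesis by (simp add: card_image)
qed

lemma harris_inequality:
  assumes "A \<subseteq> {xs. length xs = m}" "B \<subseteq> {xs. length xs = m}" "up_closed A" "up_closed B"
  shows "card A * card B \<le> 2 ^ m * card (A \<inter> B)"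
  using assms
proof (induction m arbitrary: A B)
  case 0
  then have "A \<subseteq> {[]}" "B \<subseteq> {[]}" by auto
  then show ?case by (auto simp: subset_singleton_iff)
next
  case (Suc m)
  define sec :: "bool list set \<Rightarrow> bool \<Rightarrow> bool list set"
    where "sec C b = {xs. b # xs \<in> C}" for C b
  have sec_len: "sec C b \<subseteq> {xs. length xs = m}" if "C \<subseteq> {xs. length xs = Suc m}" for C b
    using that by (auto simp: sec_def)
  have sec_up: "up_closed (sec C b)" if "up_closed C" for C b
    using that by (auto simp: sec_def up_closed_def)
  have sec_mono: "sec C False \<subseteq> sec C True" if "up_closed C" for C
    using that by (auto simp: sec_def up_closed_def list.rel_refl)
  have card_sec: "card C = card (sec C False) + card (sec C True)" if "C \<subseteq> {xs. length xs = Suc m}" for C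
    using card_split_head[OF that] by (simp add: sec_def)
  have fin: "finite (sec C b)" if "C \<subseteq> {xs. length xs = Suc m}" for C b
    using sec_len[OF that] by (rule finite_subset) simp
  have sec_Int: "sec (A \<inter> B) b = sec A b \<inter> sec B b" for b
    by (auto simp: sec_def)
  have IH: "card (sec A b) * card (sec B b) \<le> 2 ^ m * card (sec (A \<inter> B) b)" for b
    unfolding sec_Int using Suc.prems by (intro Suc.IH sec_len sec_up)
  have le: "card (sec C False) \<le> card (sec C True)"
    if "C \<subseteq> {xs. length xs = Suc m}" "up_closed C" for C
    using that by (intro card_mono fin sec_mono)
  have "card A * card B
      \<le> 2 * (card (sec A False) * card (sec B False) + card (sec A True) * card (sec B True))"
    unfolding card_sec[OF Suc.prems(1)] card_sec[OF Suc.prems(2)]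
    using Suc.prems by (intro sum_mult_le_twice_sum_sorted le)
  also have "\<dots> \<le> 2 * (2 ^ m * card (sec (A \<inter> B) False) + 2 ^ m * card (sec (A \<inter> B) True))"
    using IH[of False] IH[of True] by simp
  also have "\<dots> = 2 ^ Suc m * card (A \<inter> B)"
    using Suc.prems(1) by (simp add: card_sec[of "A \<inter> B"] le_infI1 algebra_simps)
  finally show ?case .
qed

lemma positive_prefixes_take: "positive_prefixes xs \<Longrightarrow> positive_prefixes (take t xs)"
  by (auto simp: positive_prefixes_def)

lemma card_pos_walks_sq_le_two_sided: "card (pos_walks m) ^ 2 \<le> 2 ^ m * card (two_sided_walks m)"
proof -
  have mem_rev: "xs \<in> rev ` S \<longleftrightarrow> rev xs \<in> S" for xs :: "bool list" and S
    by (auto intro: rev_image_eqI)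
  have "two_sided_walks m = pos_walks m \<inter> rev ` pos_walks m"
    by (rule set_eqI) (simp add: mem_rev two_sided_walks_def pos_walks_def positive_suffixes_def conj_ac)
  moreover have "card (rev ` pos_walks m) = card (pos_walks m)"
    by (simp add: card_image)
  moreover have "pos_walks m \<subseteq> {xs. length xs = m}" "rev ` pos_walks m \<subseteq> {xs. length xs = m}"
    by (auto simp: pos_walks_def)
  ultimately show ?thesis
    using harris_inequality[of "pos_walks m" m "rev ` pos_walks m"]
    by (simp add: power2_eq_square up_closed_pos_walks up_closed_rev_image)
qed

lemma card_two_sided_walks_le_mult:
  assumes "t \<le> m"
  shows "card (two_sided_walks m) \<le> card (pos_walks t) * card (pos_walks (m - t))"
proof -
  let ?f = "\<lambda>xs. (take t xs, take (m - t) (rev xs))"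
  have "inj_on ?f (two_sided_walks m)"
  proof (rule inj_onI)
    fix xs ys assume "xs \<in> two_sided_walks m" "ys \<in> two_sided_walks m" "?f xs = ?f ys"
    then have "take t xs = take t ys" "drop t xs = drop t ys"
      using assms by (auto simp: two_sided_walks_def take_rev)
    then show "xs = ys" by (metis append_take_drop_id)
  qed
  moreover have "?f ` two_sided_walks m \<subseteq> pos_walks t \<times> pos_walks (m - t)"
  proof
    fix p assume "p \<in> ?f ` two_sided_walks m"
    then obtain xs where "p = ?f xs" "length xs = m" "positive_prefixes xs" "positive_prefixes (rev xs)"
      by (auto simp: two_sided_walks_def positive_suffixes_def)
    then show "p \<in> pos_walks t \<times> pos_walks (m - t)"
      using assms by (simp add: pos_walks_def positive_prefixes_take)
  qed
  ultimately have "card (?f ` two_sided_walks m) \<le> card (pos_walks t \<times> pos_walks (m - t))"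
    by (intro card_mono) simp_all
  with \<open>inj_on ?f _\<close> show ?thesis by (simp add: card_image card_cartesian_product)
qed

lemma card_two_sided_walks_ge:
  assumes "4 \<le> m" shows "2 ^ m / (256 * real m) \<le> card (two_sided_walks m)"
proof -
  obtain k where m: "m = Suc k" and k: "3 \<le> k" using assms by (cases m) auto
  let ?d = "nonneg_density k" and ?Q = "real (card (two_sided_walks m))"
  have "1 / (32 * (2 * real k + 1)) = (1 / (4 * sqrt 2 * sqrt (2 * real k + 1))) ^ 2"
    by (simp add: power_divide power_mult_distrib)
  also have "\<dots> \<le> ?d ^ 2"
    using nonneg_density_ge[OF k] by (intro power_mono) auto
  finally have d: "1 / (32 * (2 * real k + 1)) \<le> ?d ^ 2" .
  have "real (card (pos_walks m) ^ 2) \<le> real (2 ^ m * card (two_sided_walks m))"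
    using card_pos_walks_sq_le_two_sided[of m] by (simp only: of_nat_le_iff)
  moreover have "real (card (pos_walks m)) = ?d * 2 ^ k"
    by (simp add: m card_pos_walks_Suc nonneg_density_def)
  ultimately have "?d ^ 2 * 2 ^ k * 2 ^ k \<le> 2 * 2 ^ k * ?Q"
    by (simp add: m power2_eq_square mult_ac)
  then have "?d ^ 2 * 2 ^ k \<le> 2 * ?Q" by simp
  moreover have "2 ^ k / (32 * (2 * real k + 1)) \<le> ?d ^ 2 * 2 ^ k"
    using d by (simp add: divide_le_eq mult.commute)
  ultimately have "2 ^ k / (32 * (2 * real k + 1)) \<le> 2 * ?Q" by linarith
  then have "2 ^ k / (64 * (2 * real k + 1)) \<le> ?Q" by (simp add: field_simps)
  moreover have "2 ^ m / (256 * real m) \<le> 2 ^ k / (64 * (2 * real k + 1))"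
    by (simp add: m field_simps)
  ultimately show ?thesis by linarith
qed

lemma card_pos_walks_sq_le_pow4: "1 \<le> j \<Longrightarrow> j * card (pos_walks j) ^ 2 \<le> 2 * 4 ^ (j - 1)"
  using card_nonneg_walks_sq_le[of "j - 1"] by (cases j) (auto simp: card_pos_walks_Suc)

lemma card_two_sided_walks_le_pow2: assumes "2 \<le> m" shows "card (two_sided_walks m) * m \<le> 2 * 2 ^ m"
proof -
  let ?Q = "card (two_sided_walks m)"
  define t where "t = m div 2"
  have t: "1 \<le> t" "1 \<le> m - t" "t \<le> m" using assms by (auto simp: t_def)
  have "?Q ^ 2 * (t * (m - t)) \<le> (card (pos_walks t) * card (pos_walks (m - t))) ^ 2 * (t * (m - t))"
    using card_two_sided_walks_le_mult[OF t(3)] by (intro mult_right_mono power_mono) auto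
  also have "\<dots> = (t * card (pos_walks t) ^ 2) * ((m - t) * card (pos_walks (m - t)) ^ 2)"
    by (simp add: power_mult_distrib mult_ac)
  also have "\<dots> \<le> (2 * 4 ^ (t - 1)) * (2 * 4 ^ (m - t - 1))"
    using t by (intro mult_le_mono card_pos_walks_sq_le_pow4)
  also have "\<dots> = 4 ^ (m - 1)"
    using t by (simp flip: power_add power_Suc)
  finally have Qt: "?Q ^ 2 * (t * (m - t)) \<le> 4 ^ (m - 1)" .
  have "m * m \<le> 8 * (t * (m - t))"
  proof -
    have "(m - 1) * m \<le> (2 * t) * (2 * (m - t))" by (intro mult_le_mono) (auto simp: t_def)
    moreover have "m \<le> 2 * (m - 1)" using assms by simp
    then have "m * m \<le> 2 * ((m - 1) * m)" using mult_right_mono by fastforce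
    ultimately show ?thesis by linarith
  qed
  then have "(?Q * m) ^ 2 \<le> ?Q ^ 2 * (8 * (t * (m - t)))"
    by (simp add: power_mult_distrib power2_eq_square)
  also have "\<dots> \<le> 8 * 4 ^ (m - 1)"
    using Qt by simp
  also have "\<dots> \<le> (2 * 2 ^ m) ^ 2"
    using assms by (cases m) (simp_all add: power_mult_distrib[symmetric] power2_eq_square)
  finally show ?thesis by (rule power2_le_imp_le) simp
qed

section \<open>Middle sets as walks\<close>

definition bit_positions :: "int \<Rightarrow> bool list \<Rightarrow> int set" where
  "bit_positions c xs = (\<lambda>i. c + int i) ` {i. i < length xs \<and> xs ! i}"

lemma bit_positions_subset: "bit_positions c xs \<subseteq> {c..c + int (length xs) - 1}"
  by (auto simp: bit_positions_def)

lemma card_bit_positions_slice: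
  assumes "i \<le> j" "j \<le> length xs"
  shows "card (bit_positions c xs \<inter> {c + int i..c + int j - 1}) = length (filter id (drop i (take j xs)))"
proof -
  have "bit_positions c xs \<inter> {c + int i..c + int j - 1} = (\<lambda>p. c + int (i + p)) ` {p. p < j - i \<and> xs ! (i + p)}"
  proof (rule set_eqI, rule iffI)
    fix y assume "y \<in> bit_positions c xs \<inter> {c + int i..c + int j - 1}"
    then obtain q where "y = c + int q" "xs ! q" "i \<le> q" "q < j" by (auto simp: bit_positions_def)
    then show "y \<in> (\<lambda>p. c + int (i + p)) ` {p. p < j - i \<and> xs ! (i + p)}"
      by (intro image_eqI[of _ _ "q - i"]) auto
  next
    fix y assume "y \<in> (\<lambda>p. c + int (i + p)) ` {p. p < j - i \<and> xs ! (i + p)}"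
    then obtain p where "y = c + int (i + p)" "p < j - i" "xs ! (i + p)" by auto
    then show "y \<in> bit_positions c xs \<inter> {c + int i..c + int j - 1}"
      using assms unfolding bit_positions_def by (auto intro!: image_eqI[of _ _ "i + p"])
  qed
  also have "card \<dots> = card {p. p < j - i \<and> xs ! (i + p)}"
    by (rule card_image) (auto simp: inj_on_def)
  also have "\<dots> = length (filter id (drop i (take j xs)))"
    using assms by (auto simp: length_filter_conv_card intro!: arg_cong[of _ _ card])
  finally show ?thesis .
qed

lemma twice_card_bit_positions_slice_gt_iff:
  assumes "i \<le> j" "j \<le> length xs"
  shows "card {c + int i..c + int j - 1} < 2 * card (bit_positions c xs \<inter> {c + int i..c + int j - 1})
     \<longleftrightarrow> 0 < balance (drop i (take j xs))"
proof -
  have "card {c + int i..c + int j - 1} = j - i" using assms by simp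
  then show ?thesis using assms by (simp add: card_bit_positions_slice balance_eq_count) linarith
qed

lemma inj_on_bit_positions: "inj_on (bit_positions c) {xs. length xs = m}"
proof (rule inj_onI)
  fix xs ys assume "xs \<in> {xs. length xs = m}" "ys \<in> {xs. length xs = m}"
    and eq: "bit_positions c xs = bit_positions c ys"
  have mem: "c + int i \<in> bit_positions c zs \<longleftrightarrow> i < length zs \<and> zs ! i" for i zs
    by (auto simp: bit_positions_def)
  show "xs = ys"
  proof (rule nth_equalityI)
    show "length xs = length ys" using \<open>xs \<in> _\<close> \<open>ys \<in> _\<close> by simp
    fix i assume "i < length xs"
    then show "xs ! i = ys ! i" using mem[of i xs] mem[of i ys] eq \<open>length xs = length ys\<close> by auto
  qed
qed

lemma subset_interval_eq_bit_positions:
  assumes "M \<subseteq> {c..c + int m - 1}"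
  shows "M = bit_positions c (map (\<lambda>i. c + int i \<in> M) [0..<m])"
proof (rule set_eqI, rule iffI)
  fix y assume "y \<in> M"
  with assms have "c \<le> y" "y < c + int m" by auto
  then have "y = c + int (nat (y - c))" "nat (y - c) < m" by (simp_all add: nat_less_iff)
  with \<open>y \<in> M\<close> show "y \<in> bit_positions c (map (\<lambda>i. c + int i \<in> M) [0..<m])"
    unfolding bit_positions_def by (intro image_eqI[of _ _ "nat (y - c)"]) auto
qed (auto simp: bit_positions_def)

lemma good_middle_bit_positions_iff:
  assumes len: "length xs = n - 22" and n: "22 \<le> n"
  shows "good_middle n (bit_positions 11 xs) \<longleftrightarrow> positive_prefixes xs \<and> positive_suffixes xs"
proof -
  let ?M = "bit_positions 11 xs" and ?L = "length xs"
  have "?M \<subseteq> {11 .. int n - 12}"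
    using bit_positions_subset[of 11 xs] len n by auto
  moreover have "card {11..10 + int k} < 2 * card (?M \<inter> {11..10 + int k}) \<longleftrightarrow> 0 < balance (take k xs)"
    if "k \<le> ?L" for k
    using twice_card_bit_positions_slice_gt_iff[of 0 k xs 11] that by simp
  moreover have "card {int n - 11 - int k..int n - 12} < 2 * card (?M \<inter> {int n - 11 - int k..int n - 12})
      \<longleftrightarrow> 0 < balance (take k (rev xs))"
    if "k \<le> ?L" for k
  proof -
    have I: "{int n - 11 - int k..int n - 12} = {11 + int (?L - k)..11 + int ?L - 1}"
      using that len n by auto
    show ?thesis
      unfolding I using twice_card_bit_positions_slice_gt_iff[of "?L - k" ?L xs 11]
      by (simp add: take_rev)
  qed
  ultimately show ?thesis
    unfolding good_middle_def positive_suffixes_def positive_prefixes_def using len by auto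
qed

lemma good_middles_eq_image:
  assumes "22 \<le> n"
  shows "{M. good_middle n M} = bit_positions 11 ` two_sided_walks (n - 22)"
proof (rule set_eqI, rule iffI)
  fix M assume "M \<in> {M. good_middle n M}"
  then have good: "good_middle n M" and sub: "M \<subseteq> {11..11 + int (n - 22) - 1}"
    using assms by (auto simp: good_middle_def)
  from sub have "M = bit_positions 11 (map (\<lambda>i. 11 + int i \<in> M) [0..<n - 22])"
    by (rule subset_interval_eq_bit_positions)
  then show "M \<in> bit_positions 11 ` two_sided_walks (n - 22)"
    using good_middle_bit_positions_iff[of "map (\<lambda>i. 11 + int i \<in> M) [0..<n - 22]" n] good assms
    by (auto simp: two_sided_walks_def intro!: image_eqI[of _ _ "map (\<lambda>i. 11 + int i \<in> M) [0..<n - 22]"])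
next
  fix M assume "M \<in> bit_positions 11 ` two_sided_walks (n - 22)"
  then show "M \<in> {M. good_middle n M}"
    using good_middle_bit_positions_iff assms by (auto simp: two_sided_walks_def)
qed

lemma card_mstd_family:
  assumes "22 \<le> n" shows "card (mstd_family n) = card (two_sided_walks (n - 22))"
proof -
  have "mstd_family n = (\<lambda>M. Lset \<union> M \<union> Rset n) ` {M. good_middle n M}"
    unfolding mstd_family_def by auto
  moreover have "inj_on (\<lambda>M. Lset \<union> M \<union> Rset n) {M. good_middle n M}"
  proof (rule inj_on_inverseI)
    fix M assume "M \<in> {M. good_middle n M}"
    then have "M \<subseteq> {11 .. int n - 12}" by (simp add: good_middle_def)
    then show "(Lset \<union> M \<union> Rset n) \<inter> {11 .. int n - 12} = M"
      by (auto simp: Lset_def Rset_def Let_def)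
  qed
  moreover have "inj_on (bit_positions 11) (two_sided_walks (n - 22))"
    by (rule inj_on_subset[OF inj_on_bit_positions]) (auto simp: two_sided_walks_def)
  ultimately show ?thesis
    using assms by (simp add: card_image good_middles_eq_image)
qed

lemma card_mstd_family_bounds:
  assumes "26 \<le> n"
  shows "2 ^ n / (2 ^ 30 * real n) \<le> card (mstd_family n)" "card (mstd_family n) \<le> 2 ^ n / real n"
proof -
  define m where "m = n - 22"
  have n: "n = m + 22" "4 \<le> m" using assms by (auto simp: m_def)
  have card: "real (card (mstd_family n)) = card (two_sided_walks m)"
    using card_mstd_family[of n] assms by (simp add: m_def)
  have "2 ^ n / (2 ^ 30 * real n) \<le> 2 ^ m / (256 * real m)"
    using n by (simp add: power_add field_simps)
  also have "\<dots> \<le> card (two_sided_walks m)"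
    using n by (intro card_two_sided_walks_ge)
  finally show "2 ^ n / (2 ^ 30 * real n) \<le> card (mstd_family n)" by (simp add: card)
  have "real (card (two_sided_walks m) * m) \<le> real (2 * 2 ^ m)"
    using card_two_sided_walks_le_pow2[of m] n by (simp only: of_nat_le_iff)
  then have "card (two_sided_walks m) \<le> 2 * 2 ^ m / real m"
    using n by (simp add: field_simps)
  also have "\<dots> \<le> 2 ^ n / real n"
    using n by (simp add: power_add field_simps)
  finally show "card (mstd_family n) \<le> 2 ^ n / real n" by (simp add: card)
qed

lemma mstd_family_bigtheta: "(\<lambda>n. real (card (mstd_family n))) \<in> \<Theta>(\<lambda>n. 2 ^ n / real n)"
proof (rule bigthetaI'[of "1 / 2 ^ 30" 1])
  show "\<forall>\<^sub>F n in at_top. 1 / 2 ^ 30 * norm (2 ^ n / real n) \<le> norm (real (card (mstd_family n)))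
      \<and> norm (real (card (mstd_family n))) \<le> 1 * norm ((2 :: real) ^ n / real n)"
    unfolding eventually_at_top_linorder
    using card_mstd_family_bounds by (intro exI[of _ 26]) auto
qed simp_all

theorem theorem2:
  shows "(\<forall>n::nat. n \<ge> 24 \<longrightarrow> (\<forall>M. good_middle n M \<longrightarrow> MSTD (Lset \<union> M \<union> Rset n)))
         \<and> (\<lambda>n. real (card (mstd_family n))) \<in> \<Theta>(\<lambda>n. 2 ^ n / real n)"
  using MSTD_Lset_good_middle_Rset mstd_family_bigtheta by blast

end
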